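(* Let $\mathcal G$ be a good and equicontinuous pseudogroup on a compact metric space $X$, with good generating set $\mathcal G_1$ and compacted generating set $\mathcal G_2$. Then there is no Borel probability measure on $X$ that is $(\mathcal G,\mathcal G_2)$-expansive.
   Context: $\mathrm{Homeo}(X)$: homeomorphisms $g:D_g\to R_g$ between open subsets of $X$, composed on natural domains $D_{h\circ g}=g^{-1}(D_h)$. A pseudogroup is a subset of $\mathrm{Homeo}(X)$ containing $\mathrm{id}_X$, closed under composition, inversion, restriction to open subsets, and gluing along open covers of the domain. $\Gamma$ generates $\mathcal G$ if $\bigcup_{g\in\Gamma}(D_g\cup R_g)=X$ and $\mathcal G$ is exactly the set of $g\in\mathrm{Homeo}(X)$ locally equal near each point of $D_g$ to a finite composition of elements of $\Gamma$ and their inverses. A finite symmetric (containing $\mathrm{id}_X$, closed under inverses) generating set $\mathcal G_1$ is good if for each $g\in\mathcal G_1$ there is a compact $K_g\subset D_g$ such that $\mathcal G_2=\{g|_{\mathrm{int}(K_g)}:g\in\mathcal G_1\}$ still generates $\mathcal G$ ($\mathcal G_2$ is the compacted generating set; $\mathcal G$ is good if it has a good generating set). $\mathcal G$ is equicontinuous if it has a generating set $\Gamma$ closed under composition and inversion and satisfying: for every $\varepsilon>0$ there is $\delta>0$ such that for all $x,y\in X$ and $g\in\Gamma$ with $x,y\in D_g$, $d(x,y)<\delta\Rightarrow d(g(x),g(y))<\varepsilon$. Let $\mathcal G^2_n=\{h_1\circ\cdots\circ h_n:h_j\in\mathcal G_2\}$, $\mathcal G^{2,x}_n=\{g\in\mathcal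 G^2_n:x\in D_g\}$, $\Phi^2_\delta(x)=\{y:d(g(x),g(y))\le\delta\ \forall n\in\mathbb N,\ \forall g\in\mathcal G^{2,x}_n\cap\mathcal G^{2,y}_n\}$. A Borel probability measure $\mu$ is $(\mathcal G,\mathcal G_2)$-expansive if there is $\delta>0$ with $\mu(\Phi^2_\delta(x))=0$ for every $x\in X$. *)

theory Defs
  imports "HOL-Analysis.Analysis" "HOL-Probability.Probability"
begin

(* Partial maps g : D_g -> R_g on a metric space (the whole type is X) are
represented as maps 'a \<rightharpoonup> 'a, with D_g = dom g and R_g = ran g.
Composition on natural domains is map composition map composition, identity is Some. *)

definition phomeo :: "('a::topological_space \<rightharpoonup> 'a) \<Rightarrow> bool" where
  "phomeo g \<longleftrightarrow> open (dom g) \<and> open (ran g) \<and>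
     (\<exists>f'. homeomorphism (dom g) (ran g) (\<lambda>x. the (g x)) f')"

definition pinv :: "('a \<rightharpoonup> 'a) \<Rightarrow> ('a \<rightharpoonup> 'a)" where
  "pinv g = (\<lambda>y. if y \<in> ran g then Some (THE x. g x = Some y) else None)"

definition pseudogroup :: "('a::topological_space \<rightharpoonup> 'a) set \<Rightarrow> bool" where
  "pseudogroup G \<longleftrightarrow>
     (\<forall>g\<in>G. phomeo g) \<and> Some \<in> G \<and>
     (\<forall>g\<in>G. \<forall>h\<in>G. h \<circ>\<^sub>m g \<in> G) \<and>
     (\<forall>g\<in>G. pinv g \<in> G) \<and>
     (\<forall>g\<in>G. \<forall>U. open U \<longrightarrow> g |` U \<in> G) \<and>
     (\<forall>g. phomeo g \<and> (\<forall>x\<in>dom g. \<exists>U. open U \<and> x \<in> U \<and> g |` U \<in> G) \<longrightarrow> g \<in> G)"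

definition pcomp_list :: "('a \<rightharpoonup> 'a) list \<Rightarrow> ('a \<rightharpoonup> 'a)" where
  "pcomp_list hs = foldr (\<lambda>h acc. h \<circ>\<^sub>m acc) hs Some"

definition generates :: "('a::topological_space \<rightharpoonup> 'a) set \<Rightarrow> ('a \<rightharpoonup> 'a) set \<Rightarrow> bool" where
  "generates \<Gamma> G \<longleftrightarrow>
     (\<forall>g\<in>\<Gamma>. phomeo g) \<and>
     (\<Union>g\<in>\<Gamma>. dom g \<union> ran g) = UNIV \<and>
     G = {g. phomeo g \<and>
            (\<forall>x\<in>dom g. \<exists>U hs. open U \<and> x \<in> U \<and> U \<subseteq> dom g \<and>
                 set hs \<subseteq> \<Gamma> \<union> pinv ` \<Gamma> \<and> g |` U = pcomp_list hs |` U)}"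

definition compacted :: "('a::topological_space \<rightharpoonup> 'a) set \<Rightarrow> (('a \<rightharpoonup> 'a) \<Rightarrow> 'a set) \<Rightarrow> ('a \<rightharpoonup> 'a) set" where
  "compacted G1 K = {g |` interior (K g) | g. g \<in> G1}"

definition good_generating_set ::
  "('a::topological_space \<rightharpoonup> 'a) set \<Rightarrow> ('a \<rightharpoonup> 'a) set \<Rightarrow> (('a \<rightharpoonup> 'a) \<Rightarrow> 'a set) \<Rightarrow> bool" where
  "good_generating_set G G1 K \<longleftrightarrow>
     finite G1 \<and> Some \<in> G1 \<and> (\<forall>g\<in>G1. pinv g \<in> G1) \<and> generates G1 G \<and>
     (\<forall>g\<in>G1. compact (K g) \<and> K g \<subseteq> dom g) \<and>
     generates (compacted G1 K) G"

definition equicontinuous_pg :: "('a::metric_space \<rightharpoonup> 'a) set \<Rightarrow> bool" where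
  "equicontinuous_pg G \<longleftrightarrow>
     (\<exists>\<Gamma>. generates \<Gamma> G \<and> (\<forall>g\<in>\<Gamma>. \<forall>h\<in>\<Gamma>. h \<circ>\<^sub>m g \<in> \<Gamma>) \<and> (\<forall>g\<in>\<Gamma>. pinv g \<in> \<Gamma>) \<and>
       (\<forall>\<epsilon>>0. \<exists>\<delta>>0. \<forall>g\<in>\<Gamma>. \<forall>x\<in>dom g. \<forall>y\<in>dom g.
           dist x y < \<delta> \<longrightarrow> dist (the (g x)) (the (g y)) < \<epsilon>))"

definition words :: "('a \<rightharpoonup> 'a) set \<Rightarrow> nat \<Rightarrow> ('a \<rightharpoonup> 'a) set" where
  "words G2 n = {pcomp_list hs | hs. length hs = n \<and> set hs \<subseteq> G2}"

(* \<Phi>^2_\<delta>(x); n ranges over \<nat> = {1,2,...}. *)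
definition Phi :: "('a::metric_space \<rightharpoonup> 'a) set \<Rightarrow> real \<Rightarrow> 'a \<Rightarrow> 'a set" where
  "Phi G2 \<delta> x = {y. \<forall>n\<ge>1. \<forall>g\<in>words G2 n. x \<in> dom g \<and> y \<in> dom g \<longrightarrow>
                      dist (the (g x)) (the (g y)) \<le> \<delta>}"

definition expansive_measure :: "('a::metric_space \<rightharpoonup> 'a) set \<Rightarrow> 'a measure \<Rightarrow> bool" where
  "expansive_measure G2 \<mu> \<longleftrightarrow> (\<exists>\<delta>>0. \<forall>x. Phi G2 \<delta> x \<in> null_sets \<mu>)"

end

theory Submission
  imports Defs
begin

(* Fix an equicontinuous generating set \<Gamma> of G closed under composition and inversion, and let
   W be \<Gamma> together with the identity. A Lebesgue number r of the compact sets K g, shrunk to at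
   most \<delta>, makes every element of G2 agree on r-balls with elements of W, and equicontinuity
   gives \<eta> > 0 such that elements of W map \<eta>-close points to r-close points. By induction on
   the length, a composition of elements of G2 defined at two \<eta>-close points agrees at both
   with a single element of W, so their images stay \<delta>-close. Thus the \<eta>-ball around x lies
   in \<Phi>\<^sub>\<delta>(x) and is null; but finitely many such balls cover the compact space, which has
   measure one. *)

definition locally_agrees_with ::
    "('a::metric_space \<rightharpoonup> 'a) set \<Rightarrow> real \<Rightarrow> ('a \<rightharpoonup> 'a) \<Rightarrow> bool" where
  "locally_agrees_with W r h \<longleftrightarrow> (\<forall>x\<in>dom h. \<exists>w\<in>W. \<forall>y\<in>dom h. dist x y < r \<longrightarrow> h y = w y)"

definition equicontinuity_modulus ::
    "('a::metric_space \<rightharpoonup> 'a) set \<Rightarrow> real \<Rightarrow> real \<Rightarrow> bool" where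
  "equicontinuity_modulus W \<epsilon> \<eta> \<longleftrightarrow>
     (\<forall>w\<in>W. \<forall>x\<in>dom w. \<forall>y\<in>dom w. dist x y < \<eta> \<longrightarrow> dist (the (w x)) (the (w y)) < \<epsilon>)"

lemma finite_common_positive_bound:
  assumes "finite A" and "\<forall>a\<in>A. \<exists>e>0. Q a e"
    and mono: "\<And>a e e'. Q a e \<Longrightarrow> 0 < e' \<Longrightarrow> e' \<le> e \<Longrightarrow> Q a e'"
  shows "\<exists>e>0. \<forall>a\<in>A. Q a (e::real)"
  using assms(1,2)
proof (induction A rule: finite_induct)
  case empty
  show ?case by (intro exI[of _ 1]) auto
next
  case (insert a A)
  then obtain e where "e > 0" "\<forall>b\<in>A. Q b e" by auto
  moreover from insert obtain e' where "e' > 0" "Q a e'" by auto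
  ultimately show ?case
    by (intro exI[of _ "min e e'"]) (auto intro: mono)
qed

lemma map_comp_Some_right [simp]: "g \<circ>\<^sub>m Some = g"
  by (auto simp: map_comp_def)

lemma map_comp_Some_left [simp]: "Some \<circ>\<^sub>m g = g"
  by (rule ext) (auto simp: map_comp_def split: option.splits)

lemma pcomp_list_Cons: "pcomp_list (h # hs) = h \<circ>\<^sub>m pcomp_list hs"
  by (simp add: pcomp_list_def)

lemma dom_map_comp_iff: "x \<in> dom (h \<circ>\<^sub>m p) \<longleftrightarrow> (\<exists>x'. p x = Some x' \<and> x' \<in> dom h)"
  by (auto simp: map_comp_def split: option.splits)

lemma insert_Some_map_comp_closed:
  assumes "\<forall>g\<in>\<Gamma>. \<forall>h\<in>\<Gamma>. h \<circ>\<^sub>m g \<in> \<Gamma>" and "v \<in> insert Some \<Gamma>" and "w \<in> insert Some \<Gamma>"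
  shows "w \<circ>\<^sub>m v \<in> insert Some \<Gamma>"
  using assms by auto

lemma pcomp_list_in_insert_Some:
  assumes comp: "\<forall>g\<in>\<Gamma>. \<forall>h\<in>\<Gamma>. h \<circ>\<^sub>m g \<in> \<Gamma>" and inv: "\<forall>g\<in>\<Gamma>. pinv g \<in> \<Gamma>"
    and "set hs \<subseteq> \<Gamma> \<union> pinv ` \<Gamma>"
  shows "pcomp_list hs \<in> insert Some \<Gamma>"
  using assms(3)
proof (induction hs)
  case Nil
  show ?case by (simp add: pcomp_list_def)
next
  case (Cons h hs)
  then have "h \<in> insert Some \<Gamma>" "pcomp_list hs \<in> insert Some \<Gamma>" using inv by auto
  then show ?case
    unfolding pcomp_list_Cons by (rule insert_Some_map_comp_closed[OF comp, rotated])
qed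

lemma generates_subset:
  assumes "generates \<Gamma> G"
  shows "\<Gamma> \<subseteq> G"
proof
  fix g assume g: "g \<in> \<Gamma>"
  then have "phomeo g" using assms by (auto simp: generates_def)
  moreover have "pcomp_list [g] = g" by (simp add: pcomp_list_def)
  ultimately have "\<exists>U hs. open U \<and> x \<in> U \<and> U \<subseteq> dom g \<and>
      set hs \<subseteq> \<Gamma> \<union> pinv ` \<Gamma> \<and> g |` U = pcomp_list hs |` U" if "x \<in> dom g" for x
    using g that by (intro exI[of _ "dom g"] exI[of _ "[g]"]) (auto simp: phomeo_def)
  with \<open>phomeo g\<close> show "g \<in> G" using assms by (auto simp: generates_def)
qed

lemma generates_locally_word:
  assumes "generates \<Gamma> G" and "g \<in> G" and "x \<in> dom g"
  obtains U hs where "open U" "x \<in> U" "set hs \<subseteq> \<Gamma> \<union> pinv ` \<Gamma>"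
    "g |` U = pcomp_list hs |` U"
proof -
  have "\<forall>x\<in>dom g. \<exists>U hs. open U \<and> x \<in> U \<and> U \<subseteq> dom g \<and>
      set hs \<subseteq> \<Gamma> \<union> pinv ` \<Gamma> \<and> g |` U = pcomp_list hs |` U"
    using assms(1,2) by (auto simp: generates_def)
  with assms(3) show ?thesis by (blast intro: that)
qed

lemma generates_uniformly_near_compact:
  assumes gen: "generates \<Gamma> G" and "g \<in> G" and "compact Kg" and "Kg \<subseteq> dom g"
  shows "\<exists>e>0. \<forall>x\<in>Kg. \<exists>hs. set hs \<subseteq> \<Gamma> \<union> pinv ` \<Gamma> \<and>
           (\<forall>y. dist x y < e \<longrightarrow> g y = pcomp_list hs y)"
proof -
  define C where
    "C = {U. open U \<and> (\<exists>hs. set hs \<subseteq> \<Gamma> \<union> pinv ` \<Gamma> \<and> g |` U = pcomp_list hs |` U)}"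
  have "\<exists>U\<in>C. x \<in> U" if "x \<in> Kg" for x
  proof -
    have "x \<in> dom g" using that \<open>Kg \<subseteq> dom g\<close> by auto
    then obtain U hs where "open U" "x \<in> U" "set hs \<subseteq> \<Gamma> \<union> pinv ` \<Gamma>"
        "g |` U = pcomp_list hs |` U"
      using generates_locally_word[OF gen \<open>g \<in> G\<close>] by blast
    then show ?thesis unfolding C_def by blast
  qed
  then have "Kg \<subseteq> \<Union>C" by blast
  moreover have "\<And>U. U \<in> C \<Longrightarrow> open U" by (simp add: C_def)
  ultimately obtain e where "0 < e" and e: "\<And>x. x \<in> Kg \<Longrightarrow> \<exists>U\<in>C. ball x e \<subseteq> U"
    using Heine_Borel_lemma[OF \<open>compact Kg\<close>] by blast
  have "\<exists>hs. set hs \<subseteq> \<Gamma> \<union> pinv ` \<Gamma> \<and> (\<forall>y. dist x y < e \<longrightarrow> g y = pcomp_list hs y)"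
    if x: "x \<in> Kg" for x
  proof -
    obtain U hs where U: "ball x e \<subseteq> U" "set hs \<subseteq> \<Gamma> \<union> pinv ` \<Gamma>" "g |` U = pcomp_list hs |` U"
      using e[OF x] unfolding C_def by blast
    have "g y = pcomp_list hs y" if "dist x y < e" for y
      using U(1) that fun_cong[OF U(3), of y] by auto
    with U(2) show ?thesis by blast
  qed
  with \<open>0 < e\<close> show ?thesis by blast
qed

lemma locally_agrees_with_mono:
  "locally_agrees_with W r h \<Longrightarrow> r' \<le> r \<Longrightarrow> locally_agrees_with W r' h"
  unfolding locally_agrees_with_def by (meson less_le_trans)

lemma restrict_interior_locally_agrees_with:
  assumes gen: "generates \<Gamma> G"
    and comp: "\<forall>g\<in>\<Gamma>. \<forall>h\<in>\<Gamma>. h \<circ>\<^sub>m g \<in> \<Gamma>" and inv: "\<forall>g\<in>\<Gamma>. pinv g \<in> \<Gamma>"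
    and "g \<in> G" and "compact Kg" and "Kg \<subseteq> dom g"
  shows "\<exists>r>0. locally_agrees_with (insert Some \<Gamma>) r (g |` interior Kg)"
proof -
  obtain e where "e > 0" and e: "\<forall>x\<in>Kg. \<exists>hs. set hs \<subseteq> \<Gamma> \<union> pinv ` \<Gamma> \<and>
      (\<forall>y. dist x y < e \<longrightarrow> g y = pcomp_list hs y)"
    using generates_uniformly_near_compact[OF gen \<open>g \<in> G\<close> \<open>compact Kg\<close> \<open>Kg \<subseteq> dom g\<close>] by blast
  have "\<exists>w\<in>insert Some \<Gamma>. \<forall>y\<in>dom (g |` interior Kg). dist x y < e \<longrightarrow> (g |` interior Kg) y = w y"
    if "x \<in> dom (g |` interior Kg)" for x
  proof -
    have "x \<in> Kg" using that interior_subset[of Kg] by auto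
    then obtain hs where "set hs \<subseteq> \<Gamma> \<union> pinv ` \<Gamma>" "\<forall>y. dist x y < e \<longrightarrow> g y = pcomp_list hs y"
      using e by blast
    then show ?thesis
      using pcomp_list_in_insert_Some[OF comp inv] by (intro bexI[of _ "pcomp_list hs"]) auto
  qed
  with \<open>e > 0\<close> show ?thesis unfolding locally_agrees_with_def by blast
qed

lemma compacted_locally_agrees_with:
  assumes gen: "generates \<Gamma> G"
    and comp: "\<forall>g\<in>\<Gamma>. \<forall>h\<in>\<Gamma>. h \<circ>\<^sub>m g \<in> \<Gamma>" and inv: "\<forall>g\<in>\<Gamma>. pinv g \<in> \<Gamma>"
    and "finite G1" and "G1 \<subseteq> G" and K: "\<forall>g\<in>G1. compact (K g) \<and> K g \<subseteq> dom g"
  shows "\<exists>r>0. \<forall>h\<in>compacted G1 K. locally_agrees_with (insert Some \<Gamma>) r h"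
proof (rule finite_common_positive_bound)
  have "compacted G1 K = (\<lambda>g. g |` interior (K g)) ` G1"
    by (auto simp: compacted_def)
  then show "finite (compacted G1 K)" using \<open>finite G1\<close> by simp
  show "\<forall>h\<in>compacted G1 K. \<exists>r>0. locally_agrees_with (insert Some \<Gamma>) r h"
    using restrict_interior_locally_agrees_with[OF gen comp inv] \<open>G1 \<subseteq> G\<close> K
    by (auto simp: compacted_def)
qed (rule locally_agrees_with_mono)

lemma equicontinuity_modulus_insert_Some:
  assumes "\<forall>\<epsilon>>0. \<exists>\<eta>>0. equicontinuity_modulus \<Gamma> \<epsilon> \<eta>" and "\<epsilon> > 0"
  shows "\<exists>\<eta>>0. equicontinuity_modulus (insert Some \<Gamma>) \<epsilon> \<eta>"
proof -
  obtain \<eta> where "\<eta> > 0" "equicontinuity_modulus \<Gamma> \<epsilon> \<eta>" using assms by blast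
  then show ?thesis
    using \<open>\<epsilon> > 0\<close> unfolding equicontinuity_modulus_def
    by (intro exI[of _ "min \<eta> \<epsilon>"]) auto
qed

lemma pcomp_list_agrees_with_element:
  assumes comp: "\<And>v w. v \<in> W \<Longrightarrow> w \<in> W \<Longrightarrow> w \<circ>\<^sub>m v \<in> W" and "Some \<in> W"
    and local: "\<forall>h\<in>S. locally_agrees_with W r h" and modulus: "equicontinuity_modulus W r \<eta>"
    and "set hs \<subseteq> S" and "x \<in> dom (pcomp_list hs)" and "y \<in> dom (pcomp_list hs)"
    and "dist x y < \<eta>"
  shows "\<exists>w\<in>W. w x = pcomp_list hs x \<and> w y = pcomp_list hs y"
  using assms(5-7)
proof (induction hs)
  case Nil
  then show ?case using \<open>Some \<in> W\<close> by (auto simp: pcomp_list_def)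
next
  case (Cons h hs)
  obtain x' y' where x': "pcomp_list hs x = Some x'" "x' \<in> dom h"
    and y': "pcomp_list hs y = Some y'" "y' \<in> dom h"
    using Cons.prems(2,3) by (auto simp: pcomp_list_Cons dom_map_comp_iff)
  then obtain w where "w \<in> W" and w: "w x = Some x'" "w y = Some y'"
    using Cons by auto
  then have "dist x' y' < r"
    using modulus \<open>dist x y < \<eta>\<close> by (force simp: equicontinuity_modulus_def)
  then have "0 < r" using zero_le_dist[of x' y'] by linarith
  have "h \<in> S" using Cons.prems(1) by simp
  then obtain v where "v \<in> W" and v: "\<forall>z\<in>dom h. dist x' z < r \<longrightarrow> h z = v z"
    using local x'(2) unfolding locally_agrees_with_def by blast
  have "h x' = v x'" using v[rule_format, OF x'(2)] \<open>0 < r\<close> by simp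
  moreover have "h y' = v y'" using v[rule_format, OF y'(2) \<open>dist x' y' < r\<close>] .
  ultimately show ?case
    using comp[OF \<open>w \<in> W\<close> \<open>v \<in> W\<close>] w x' y'
    by (intro bexI[of _ "v \<circ>\<^sub>m w"]) (simp_all add: pcomp_list_Cons)
qed

lemma ball_subset_Phi:
  assumes comp: "\<And>v w. v \<in> W \<Longrightarrow> w \<in> W \<Longrightarrow> w \<circ>\<^sub>m v \<in> W" and "Some \<in> W"
    and local: "\<forall>h\<in>S. locally_agrees_with W r h" and modulus: "equicontinuity_modulus W r \<eta>"
    and "r \<le> \<delta>"
  shows "ball x \<eta> \<subseteq> Phi S \<delta> x"
proof
  fix y assume "y \<in> ball x \<eta>"
  then have "dist x y < \<eta>" by simp
  have "dist (the (g x)) (the (g y)) \<le> \<delta>"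
    if g: "g \<in> words S n" "x \<in> dom g" "y \<in> dom g" for n g
  proof -
    obtain hs where hs: "g = pcomp_list hs" "set hs \<subseteq> S"
      using g(1) unfolding words_def by blast
    with g(2,3) obtain w where "w \<in> W" "w x = g x" "w y = g y"
      using pcomp_list_agrees_with_element[OF comp \<open>Some \<in> W\<close> local modulus hs(2) _ _
          \<open>dist x y < \<eta>\<close>] by blast
    moreover from this have "x \<in> dom w" "y \<in> dom w" using g(2,3) by (simp_all add: domIff)
    ultimately show ?thesis
      using modulus \<open>dist x y < \<eta>\<close> \<open>r \<le> \<delta>\<close>
      unfolding equicontinuity_modulus_def by fastforce
  qed
  then show "y \<in> Phi S \<delta> x" by (auto simp: Phi_def)
qed

lemma compact_prob_space_nonnull_ball:
  assumes "compact (UNIV :: 'a::metric_space set)" and "prob_space \<mu>" and "sets \<mu> = sets borel"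
    and "\<eta> > 0"
  shows "\<exists>x. ball (x::'a) \<eta> \<notin> null_sets \<mu>"
proof -
  have "UNIV \<subseteq> (\<Union>c\<in>UNIV. ball (c::'a) \<eta>)" using \<open>\<eta> > 0\<close> by auto
  then obtain C where "C \<subseteq> UNIV" and "finite C" and cover: "UNIV \<subseteq> (\<Union>c\<in>C. ball (c::'a) \<eta>)"
    by (rule compactE_image[OF assms(1) open_ball])
  have "(\<Union>c\<in>C. ball c \<eta>) = space \<mu>"
    using cover sets_eq_imp_space_eq[OF \<open>sets \<mu> = sets borel\<close>] by auto
  then have "(\<Union>c\<in>C. ball c \<eta>) \<notin> null_sets \<mu>"
    using prob_space.emeasure_space_1[OF \<open>prob_space \<mu>\<close>] by auto
  with \<open>finite C\<close> show ?thesis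
    using null_sets.finite_UN[of C "\<lambda>c. ball c \<eta>"] by blast
qed

theorem mainTheorem19:
  fixes G G1 :: "('a::metric_space \<rightharpoonup> 'a) set" and K :: "('a \<rightharpoonup> 'a) \<Rightarrow> 'a set"
  assumes "compact (UNIV :: 'a set)"
    and "pseudogroup G"
    and "good_generating_set G G1 K"
    and "equicontinuous_pg G"
  shows "\<not> (\<exists>\<mu>::'a measure. prob_space \<mu> \<and> sets \<mu> = sets borel \<and>
             expansive_measure (compacted G1 K) \<mu>)"
proof
  assume "\<exists>\<mu>::'a measure. prob_space \<mu> \<and> sets \<mu> = sets borel \<and>
             expansive_measure (compacted G1 K) \<mu>"
  then obtain \<mu> :: "'a measure" and \<delta> where \<mu>: "prob_space \<mu>" "sets \<mu> = sets borel"
    and "\<delta> > 0" and null: "\<And>x. Phi (compacted G1 K) \<delta> x \<in> null_sets \<mu>"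
    by (auto simp: expansive_measure_def)
  obtain \<Gamma> where gen: "generates \<Gamma> G" and comp: "\<forall>g\<in>\<Gamma>. \<forall>h\<in>\<Gamma>. h \<circ>\<^sub>m g \<in> \<Gamma>"
    and inv: "\<forall>g\<in>\<Gamma>. pinv g \<in> \<Gamma>" and equicont: "\<forall>\<epsilon>>0. \<exists>\<eta>>0. equicontinuity_modulus \<Gamma> \<epsilon> \<eta>"
    using assms(4) by (auto simp: equicontinuous_pg_def equicontinuity_modulus_def)
  have "finite G1" "G1 \<subseteq> G" "\<forall>g\<in>G1. compact (K g) \<and> K g \<subseteq> dom g"
    using assms(3) generates_subset by (auto simp: good_generating_set_def)
  then obtain r where "r > 0" and "\<forall>h\<in>compacted G1 K. locally_agrees_with (insert Some \<Gamma>) r h"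
    using compacted_locally_agrees_with[OF gen comp inv] by blast
  then have local: "\<forall>h\<in>compacted G1 K. locally_agrees_with (insert Some \<Gamma>) (min r \<delta>) h"
    using locally_agrees_with_mono by (meson min.cobounded1)
  obtain \<eta> where "\<eta> > 0" and modulus: "equicontinuity_modulus (insert Some \<Gamma>) (min r \<delta>) \<eta>"
    using equicontinuity_modulus_insert_Some[OF equicont, of "min r \<delta>"] \<open>r > 0\<close> \<open>\<delta> > 0\<close> by auto
  have "ball x \<eta> \<subseteq> Phi (compacted G1 K) \<delta> x" for x
    using ball_subset_Phi[OF insert_Some_map_comp_closed[OF comp] _ local modulus] by simp
  then have "ball x \<eta> \<in> null_sets \<mu>" for x
    using null_sets_subset[OF null] \<mu>(2) by (metis borel_open open_ball)
  then show False
    using compact_prob_space_nonnull_ball[OF assms(1) \<mu> \<open>\<eta> > 0\<close>] by blast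
qed

end
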